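(* Let $(U_a, U_b, R_a, R_b)$ be a belief structure, with $R_a \subseteq U_a \times U_b$ and $R_b \subseteq U_b \times U_a$. Suppose that for every predicate $p$ on $U_a$ in some class of predicates there is $x_0 \in U_a$ such that (1) $R_a(x_0) \subseteq \{ y \mid R_b(y) = \{ x \mid p(x) \} \}$, and (2) $\exists y.\, R_a(x_0, y)$. Suppose moreover that this class contains the predicates $q(x) \equiv \exists y. [R_a(x,y) \wedge R_b(y,x)]$ and $p(x) \equiv O(q(x))$. Then every unary propositional operator $O$ has a fixpoint: with $x_0$ chosen for the predicate $p(x) \equiv O(q(x))$, one has $O(q(x_0)) \Leftrightarrow q(x_0)$.
   Context: A belief structure is $(U_a, U_b, R_a, R_b)$ with relations $R_a \subseteq U_a \times U_b$, $R_b \subseteq U_b \times U_a$; $R_a(x)$ denotes $\{y \mid R_a(x,y)\}$. Assumption (1) says $x_0$ believes that $y$ assumes $p$, modally $x_0 \models \Box_a \boxplus_b p \wedge \Diamond_a \top$ together with (2). The Basic Lemma gives, under (1) and (2), $p(x_0) \Leftrightarrow \exists y.[R_a(x_0,y) \wedge R_b(y,x_0)]$. *)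

theory Defs
  imports Main
begin

text \<open>A belief structure over carrier types 'a (U_a) and 'b (U_b):
  Ra is a relation from U_a to U_b, Rb a relation from U_b to U_a.
  Ra `` {x} is the set R_a(x).\<close>

definition believes_assumes ::
  "('a \<times> 'b) set \<Rightarrow> ('b \<times> 'a) set \<Rightarrow> ('a \<Rightarrow> bool) \<Rightarrow> 'a \<Rightarrow> bool" where
  "believes_assumes Ra Rb p x0 \<longleftrightarrow>
     Ra `` {x0} \<subseteq> {y. Rb `` {y} = {x. p x}} \<and> (\<exists>y. (x0, y) \<in> Ra)"

definition diag_pred :: "('a \<times> 'b) set \<Rightarrow> ('b \<times> 'a) set \<Rightarrow> 'a \<Rightarrow> bool" where
  "diag_pred Ra Rb x \<longleftrightarrow> (\<exists>y. (x, y) \<in> Ra \<and> (y, x) \<in> Rb)"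

end

theory Submission
  imports Defs
begin

text \<open>If \<open>x\<^sub>0\<close> believes that \<open>y\<close> assumes \<open>p\<close>, then for every
  \<open>y \<in> R\<^sub>a(x\<^sub>0)\<close> the set \<open>R\<^sub>b(y)\<close> is exactly the extension of \<open>p\<close>, and such a \<open>y\<close> exists.
  Hence \<open>p x\<^sub>0\<close> holds iff \<open>x\<^sub>0 \<in> R\<^sub>b(y)\<close> for some \<open>y \<in> R\<^sub>a(x\<^sub>0)\<close>, i.e. iff \<open>q x\<^sub>0\<close>.
  Taking \<open>p = O \<circ> q\<close> gives the fixpoint \<open>O (q x\<^sub>0) \<longleftrightarrow> q x\<^sub>0\<close>, a form of the
  Brandenburger--Keisler paradox.\<close>

lemma believes_assumes_iff_diag_pred:
  assumes "believes_assumes Ra Rb p x0"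
  shows "p x0 \<longleftrightarrow> diag_pred Ra Rb x0"
proof -
  from assms obtain y where y: "(x0, y) \<in> Ra"
    and ext: "\<And>y. (x0, y) \<in> Ra \<Longrightarrow> Rb `` {y} = {x. p x}"
    unfolding believes_assumes_def by blast
  show ?thesis
  proof
    assume "p x0"
    with ext[OF y] have "(y, x0) \<in> Rb" by blast
    with y show "diag_pred Ra Rb x0" unfolding diag_pred_def by blast
  next
    assume "diag_pred Ra Rb x0"
    then obtain z where "(x0, z) \<in> Ra" "(z, x0) \<in> Rb"
      unfolding diag_pred_def by blast
    with ext show "p x0" by blast
  qed
qed

theorem lemma2:
  fixes Ra :: "('a \<times> 'b) set" and Rb :: "('b \<times> 'a) set"
    and C :: "('a \<Rightarrow> bool) set" and Op :: "bool \<Rightarrow> bool"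
  assumes complete: "\<forall>p\<in>C. \<exists>x0. believes_assumes Ra Rb p x0"
    and q_in: "diag_pred Ra Rb \<in> C"
    and p_in: "(\<lambda>x. Op (diag_pred Ra Rb x)) \<in> C"
  shows "(\<exists>x0. believes_assumes Ra Rb (\<lambda>x. Op (diag_pred Ra Rb x)) x0)
     \<and> (\<forall>x0. believes_assumes Ra Rb (\<lambda>x. Op (diag_pred Ra Rb x)) x0 \<longrightarrow>
              (Op (diag_pred Ra Rb x0) \<longleftrightarrow> diag_pred Ra Rb x0))"
proof
  show "\<exists>x0. believes_assumes Ra Rb (\<lambda>x. Op (diag_pred Ra Rb x)) x0"
    using complete p_in by blast
qed (intro allI impI believes_assumes_iff_diag_pred)

end
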